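(* In the setting of the context, let $\mu_1,\mu_2$ be nowhere-equal solutions of $$\widehat e_1\cdot\nabla\mu=-C_{31}^{2}-\mu\big(C_{31}^{3}+C_{12}^{2}\big)-\mu^{2}C_{12}^{3}$$ and let $\alpha_1,\alpha_2$ be nowhere-vanishing functions satisfying $\widehat e_1\cdot\nabla\ln|\alpha_i/\Vert v\Vert|=C_{31}^{3}+\mu_iC_{12}^{3}$ for $i=1,2$. Then the Poisson vector fields $J_i=\alpha_i(\widehat e_2+\mu_i\widehat e_3)$, $i=1,2$, are compatible, i.e. $J_1+J_2$ is also a Poisson vector field.
   Context: Setting: $M$ is an oriented three-dimensional manifold with a Riemannian metric $g$; $\nabla$, $\nabla\times$ and $\times$ denote gradient, curl and cross product. A Poisson vector field is a vector field $J$ with $J\cdot(\nabla\times J)=0$; $J_1,J_2$ are compatible if $J_1+J_2$ is also Poisson. $v$ is a nowhere vanishing vector field, $\widehat e_1=v/\Vert v\Vert$, extended to a local oriented orthonormal frame $(\widehat e_1,\widehat e_2,\widehat e_3)$ with $\widehat e_3=\widehat e_1\times\widehat e_2$, and structure functions $C_{ij}^k$ defined by $[\widehat e_i,\widehat e_j]=C_{ij}^k\widehat e_k$. *)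

theory Defs
  imports "HOL-Analysis.Analysis"
begin

text \<open>Local coordinate model: an open chart domain U of R^3 (positively oriented chart),
  Riemannian metric given by its Gram matrix field g.\<close>

definition ginner :: "(real^3 \<Rightarrow> real^3^3) \<Rightarrow> real^3 \<Rightarrow> real^3 \<Rightarrow> real^3 \<Rightarrow> real" where
  "ginner g x u w = u \<bullet> (g x *v w)"

definition gnorm :: "(real^3 \<Rightarrow> real^3^3) \<Rightarrow> real^3 \<Rightarrow> real^3 \<Rightarrow> real" where
  "gnorm g x u = sqrt (ginner g x u u)"

definition riem_metric :: "(real^3 \<Rightarrow> real^3^3) \<Rightarrow> (real^3) set \<Rightarrow> bool" where
  "riem_metric g U \<longleftrightarrow> open U \<and>
     (\<forall>x\<in>U. transpose (g x) = g x \<and> (\<forall>u. u \<noteq> 0 \<longrightarrow> u \<bullet> (g x *v u) > 0)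
            \<and> g differentiable (at x))"

definition dderiv :: "(real^3 \<Rightarrow> 'b::real_normed_vector) \<Rightarrow> (real^3 \<Rightarrow> real^3) \<Rightarrow> real^3 \<Rightarrow> 'b" where
  "dderiv f X x = frechet_derivative f (at x) (X x)"

text \<open>Lie bracket, [X,Y]f = X(Yf) - Y(Xf).\<close>
definition lie_bracket :: "(real^3 \<Rightarrow> real^3) \<Rightarrow> (real^3 \<Rightarrow> real^3) \<Rightarrow> real^3 \<Rightarrow> real^3" where
  "lie_bracket X Y x = dderiv Y X x - dderiv X Y x"

definition pd :: "(real^3 \<Rightarrow> real^3) \<Rightarrow> 3 \<Rightarrow> 3 \<Rightarrow> real^3 \<Rightarrow> real" where
  "pd w j k x = (frechet_derivative w (at x) (axis j 1)) $ k"

text \<open>Riemannian curl: (curl J)^i = (1/sqrt(det g)) eps^{ijk} d_j J_k, with J_k = g_{kl} J^l.\<close>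
definition curl :: "(real^3 \<Rightarrow> real^3^3) \<Rightarrow> (real^3 \<Rightarrow> real^3) \<Rightarrow> real^3 \<Rightarrow> real^3" where
  "curl g J x = (let w = (\<lambda>y. g y *v J y) in
     (1 / sqrt (det (g x))) *\<^sub>R
       vector [pd w 2 3 x - pd w 3 2 x, pd w 3 1 x - pd w 1 3 x, pd w 1 2 x - pd w 2 1 x])"

text \<open>Riemannian cross product: (a x b)_l = sqrt(det g) eps_{ljk} a^j b^k, then raise the index.\<close>
definition gcross :: "(real^3 \<Rightarrow> real^3^3) \<Rightarrow> real^3 \<Rightarrow> real^3 \<Rightarrow> real^3 \<Rightarrow> real^3" where
  "gcross g x a b = sqrt (det (g x)) *\<^sub>R (matrix_inv (g x) *v cross3 a b)"

definition poisson :: "(real^3 \<Rightarrow> real^3^3) \<Rightarrow> (real^3) set \<Rightarrow> (real^3 \<Rightarrow> real^3) \<Rightarrow> bool" where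
  "poisson g U J \<longleftrightarrow> (\<forall>x\<in>U. ginner g x (J x) (curl g J x) = 0)"

definition compatible :: "(real^3 \<Rightarrow> real^3^3) \<Rightarrow> (real^3) set \<Rightarrow> (real^3 \<Rightarrow> real^3) \<Rightarrow> (real^3 \<Rightarrow> real^3) \<Rightarrow> bool" where
  "compatible g U J1 J2 \<longleftrightarrow> poisson g U J1 \<and> poisson g U J2 \<and> poisson g U (\<lambda>x. J1 x + J2 x)"

end

(* For J = f2 E2 + f3 E3 in the orthonormal frame, J . curl J is a nonzero multiple of
   (w /\ dw)(E1, E2, E3) for the metrically dual 1-form w = f2 e2 + f3 e3, and Cartan's formula
   dw(X, Y) = X w(Y) - Y w(X) - w([X, Y]) expresses this through the E1-derivatives of f2, f3 and
   the structure functions.  For J1 + J2 = (a1 + a2) E2 + (a1 mu1 + a2 mu2) E3 the result is a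
   quadratic form in (a1, a2): its diagonal terms vanish by the Riccati equation for mu1, mu2, and
   the transport equations for a1, a2 make the mixed term cancel as well. *)

theory Submission
  imports Defs
begin

lemma inner_matrix_symmetric:
  fixes A :: "real^'n^'n"
  assumes "transpose A = A"
  shows "x \<bullet> (A *v y) = (A *v x) \<bullet> y"
  by (metis assms dot_lmul_matrix vector_transpose_matrix)

lemma det_mult_gram3:
  fixes A :: "real^3^3"
  shows "det (vector [x, y, z] :: real^3^3) * det A * det (vector [p, q, r] :: real^3^3) =
    det (vector [vector [x \<bullet> (A *v p), x \<bullet> (A *v q), x \<bullet> (A *v r)],
                 vector [y \<bullet> (A *v p), y \<bullet> (A *v q), y \<bullet> (A *v r)],
                 vector [z \<bullet> (A *v p), z \<bullet> (A *v q), z \<bullet> (A *v r)]] :: real^3^3)"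
proof -
  let ?X = "vector [x, y, z] :: real^3^3" and ?P = "vector [p, q, r] :: real^3^3"
  have "det ?X * det A * det ?P = det (?X ** A ** transpose ?P)"
    by (simp add: det_mul)
  also have "?X ** A ** transpose ?P = vector [vector [x \<bullet> (A *v p), x \<bullet> (A *v q), x \<bullet> (A *v r)],
      vector [y \<bullet> (A *v p), y \<bullet> (A *v q), y \<bullet> (A *v r)],
      vector [z \<bullet> (A *v p), z \<bullet> (A *v q), z \<bullet> (A *v r)]]"
    unfolding vec_eq_iff forall_3
    by (simp add: matrix_matrix_mult_def transpose_def matrix_vector_mult_def inner_vec_def
        sum_3 algebra_simps)
  finally show ?thesis .
qed

lemma dual_basis_cross3:
  fixes e1 e2 e3 t1 t2 t3 c :: "real^3"
  assumes "e1 \<bullet> t1 = 1" "e1 \<bullet> t2 = 0" "e1 \<bullet> t3 = 0"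
    and "e2 \<bullet> t1 = 0" "e2 \<bullet> t2 = 1" "e2 \<bullet> t3 = 0"
    and "e3 \<bullet> t1 = 0" "e3 \<bullet> t2 = 0" "e3 \<bullet> t3 = 1"
  shows "det (vector [e1, e2, e3] :: real^3^3) \<noteq> 0"
    and "det (vector [e1, e2, e3] :: real^3^3) * (t1 \<bullet> c) = c \<bullet> cross3 e2 e3"
    and "det (vector [e1, e2, e3] :: real^3^3) * (t2 \<bullet> c) = c \<bullet> cross3 e3 e1"
    and "det (vector [e1, e2, e3] :: real^3^3) * (t3 \<bullet> c) = c \<bullet> cross3 e1 e2"
proof -
  define D where "D = det (vector [e1, e2, e3] :: real^3^3)"
  define T where "T = det (vector [t1, t2, t3] :: real^3^3)"
  have rows: "det (vector [u, vector [0, 1, 0], vector [0, 0, 1]] :: real^3^3) = u $ 1"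
    "det (vector [u, vector [0, 0, 1], vector [1, 0, 0]] :: real^3^3) = u $ 2"
    "det (vector [u, vector [1, 0, 0], vector [0, 1, 0]] :: real^3^3) = u $ 3" for u :: "real^3"
    by (simp_all add: det_3)
  have DT: "D * T = 1"
    using det_mult_gram3[of e1 e2 e3 "mat 1" t1 t2 t3] assms unfolding D_def T_def by (simp add: rows)
  have HT: "c \<bullet> cross3 e2 e3 * T = t1 \<bullet> c" "c \<bullet> cross3 e3 e1 * T = t2 \<bullet> c"
    "c \<bullet> cross3 e1 e2 * T = t3 \<bullet> c"
    using det_mult_gram3[of c e2 e3 "mat 1" t1 t2 t3] det_mult_gram3[of c e3 e1 "mat 1" t1 t2 t3]
      det_mult_gram3[of c e1 e2 "mat 1" t1 t2 t3] assms
    unfolding T_def by (simp_all add: rows dot_cross_det inner_commute)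
  have XT: "D * (X * T) = X" for X
    using DT by (metis mult.left_commute mult_1_right)
  show "D \<noteq> 0"
    using DT by auto
  show "D * (t1 \<bullet> c) = c \<bullet> cross3 e2 e3" "D * (t2 \<bullet> c) = c \<bullet> cross3 e3 e1"
    "D * (t3 \<bullet> c) = c \<bullet> cross3 e1 e2"
    by (simp_all flip: HT add: XT)
qed

lemma cross3_orthonormal_nonzero:
  fixes G :: "real^3^3"
  assumes "a \<bullet> (G *v a) = 1" and "b \<bullet> (G *v b) = 1" and "a \<bullet> (G *v b) = 0"
  shows "cross3 a b \<noteq> 0"
proof
  assume "cross3 a b = 0"
  then have "a = 0 \<or> b = 0 \<or> (\<exists>c. b = c *\<^sub>R a)"
    by (simp add: cross_eq_0 collinear_lemma)
  then show False
    using assms by (auto simp: matrix_vector_mult_scaleR)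
qed

lemma invertible_if_positive_definite:
  fixes G :: "real^'n^'n"
  assumes "\<forall>u. u \<noteq> 0 \<longrightarrow> u \<bullet> (G *v u) > 0"
  shows "G ** matrix_inv G = mat 1"
proof -
  have "\<forall>u. G *v u = 0 \<longrightarrow> u = 0"
    using assms by (metis inner_zero_right less_irrefl)
  then have "invertible G"
    by (simp add: invertible_left_inverse matrix_left_invertible_ker)
  then show ?thesis
    unfolding invertible_def matrix_inv_def by (metis (mono_tags, lifting) someI_ex)
qed

lemma gcross_orthonormal:
  fixes G :: "real^3^3"
  assumes sym: "transpose G = G" and pos: "\<forall>u. u \<noteq> 0 \<longrightarrow> u \<bullet> (G *v u) > 0"
    and a: "a \<bullet> (G *v a) = 1" and b: "b \<bullet> (G *v b) = 1" and ab: "a \<bullet> (G *v b) = 0"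
    and c: "c = sqrt (det G) *\<^sub>R (matrix_inv G *v cross3 a b)"
  shows "c \<bullet> (G *v c) = 1" and "a \<bullet> (G *v c) = 0" and "b \<bullet> (G *v c) = 0"
proof -
  define y where "y = matrix_inv G *v cross3 a b"
  define m where "m = y \<bullet> (G *v y)"
  have Gy: "G *v y = cross3 a b"
    unfolding y_def matrix_vector_mul_assoc invertible_if_positive_definite[OF pos] by simp
  have "y \<noteq> 0"
    using Gy cross3_orthonormal_nonzero[OF a b ab] by auto
  then have "m > 0"
    using pos unfolding m_def by blast
  have aGy: "a \<bullet> (G *v y) = 0" and bGy: "b \<bullet> (G *v y) = 0"
    unfolding Gy by (simp_all add: dot_cross_self)
  have swap: "u \<bullet> (G *v w) = w \<bullet> (G *v u)" for u w
    using inner_matrix_symmetric[OF sym] by (metis inner_commute)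
  have "det (vector [a, b, y] :: real^3^3) = m"
    unfolding m_def Gy dot_cross_det[symmetric] by (simp add: cross3_def inner_vec_def sum_3 algebra_simps)
  moreover have "y \<bullet> (G *v a) = 0" "y \<bullet> (G *v b) = 0" "b \<bullet> (G *v a) = 0"
    using aGy bGy ab swap by metis+
  moreover have "det (vector [vector [1, 0, 0], vector [0, 1, 0], vector [0, 0, m]] :: real^3^3) = m"
    by (simp add: det_3)
  \<comment> \<open>\<open>(a, b, y)\<close> has \<open>G\<close>-Gram matrix \<open>diag(1, 1, m)\<close> and determinant \<open>m\<close>.\<close>
  ultimately have "m * det G * m = m"
    using det_mult_gram3[of a b y G a b y] by (simp add: a b ab aGy bGy flip: m_def)
  with \<open>m > 0\<close> have "det G * m = 1"
    by (simp add: mult.commute)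
  with \<open>m > 0\<close> have "det G > 0"
    by (metis zero_less_mult_pos2 zero_less_one)
  then have "sqrt (det G) * sqrt (det G) = det G"
    by simp
  with \<open>det G * m = 1\<close> show "c \<bullet> (G *v c) = 1"
    by (simp add: c y_def[symmetric] matrix_vector_mult_scaleR mult.assoc[symmetric] flip: m_def)
  show "a \<bullet> (G *v c) = 0" "b \<bullet> (G *v c) = 0"
    using aGy bGy by (simp_all add: c y_def[symmetric] matrix_vector_mult_scaleR)
qed

lemma bounded_bilinear_matrix_vector_mult:
  "bounded_bilinear (\<lambda>(A::real^'n^'m) (u::real^'n). A *v u)"
proof -
  have "bilinear (\<lambda>(A::real^'n^'m) (u::real^'n). A *v u)"
    unfolding bilinear_def
  proof (intro conjI allI)
    show "linear (\<lambda>u. A *v u)" for A :: "real^'n^'m"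
      by simp
    show "linear (\<lambda>A::real^'n^'m. A *v u)" for u :: "real^'n"
      by (rule linearI) (simp_all add: matrix_vector_mult_add_rdistrib scaleR_matrix_vector_assoc)
  qed
  then show ?thesis
    using bilinear_conv_bounded_bilinear by blast
qed

lemma differentiable_matrix_vector_mult:
  fixes A :: "'a::real_normed_vector \<Rightarrow> real^'n^'m"
  assumes "A differentiable (at x within S)" and "u differentiable (at x within S)"
  shows "(\<lambda>y. A y *v u y) differentiable (at x within S)"
  using assms bounded_bilinear.FDERIV[OF bounded_bilinear_matrix_vector_mult]
  unfolding differentiable_def by blast

lemma has_derivative_ln_abs:
  fixes f :: "'a::real_normed_vector \<Rightarrow> real"
  assumes f: "(f has_derivative f') (at x within S)" and "f x \<noteq> 0"
  shows "((\<lambda>y. ln \<bar>f y\<bar>) has_derivative (\<lambda>v. f' v / f x)) (at x within S)"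
proof -
  \<comment> \<open>ln |t| = ln (t * t) / 2 avoids differentiating the absolute value.\<close>
  have ln_abs: "ln \<bar>t\<bar> = ln (t * t) / 2" for t :: real
  proof (cases "t = 0")
    case False
    have "ln (t * t) = ln (\<bar>t\<bar> ^ 2)"
      by (simp add: power2_eq_square)
    also have "\<dots> = 2 * ln \<bar>t\<bar>"
      using False by (subst ln_realpow) auto
    finally show ?thesis
      by simp
  qed simp
  have "0 < f x * f x"
    using \<open>f x \<noteq> 0\<close> by (metis not_real_square_gt_zero)
  show ?thesis
  proof (rule has_derivative_eq_rhs)
    show "((\<lambda>y. ln \<bar>f y\<bar>) has_derivative
        (\<lambda>v. (f x * f' v + f' v * f x) * inverse (f x * f x) * inverse 2)) (at x within S)"
      unfolding ln_abs divide_inverse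
      by (rule has_derivative_mult_left[OF has_derivative_ln[OF \<open>0 < f x * f x\<close> has_derivative_mult[OF f f]]])
    show "(\<lambda>v. (f x * f' v + f' v * f x) * inverse (f x * f x) * inverse 2) = (\<lambda>v. f' v / f x)"
      using \<open>f x \<noteq> 0\<close> by (simp add: fun_eq_iff field_simps)
  qed
qed

lemma dderiv_eqI: "(f has_derivative f') (at x) \<Longrightarrow> dderiv f X x = f' (X x)"
  unfolding dderiv_def by (metis frechet_derivative_at)

lemma dderiv_const: "dderiv (\<lambda>_. c) X x = 0"
  unfolding dderiv_def by simp

lemma dderiv_add:
  fixes f h :: "real^3 \<Rightarrow> 'a::real_normed_vector"
  assumes "f differentiable (at x)" and "h differentiable (at x)"
  shows "dderiv (\<lambda>y. f y + h y) X x = dderiv f X x + dderiv h X x"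
  using dderiv_eqI[OF has_derivative_add, OF assms[unfolded frechet_derivative_works]]
  by (simp add: dderiv_def)

lemma dderiv_mult:
  fixes f h :: "real^3 \<Rightarrow> 'a::real_normed_algebra"
  assumes "f differentiable (at x)" and "h differentiable (at x)"
  shows "dderiv (\<lambda>y. f y * h y) X x = f x * dderiv h X x + dderiv f X x * h x"
  using dderiv_eqI[OF has_derivative_mult, OF assms[unfolded frechet_derivative_works]]
  by (simp add: dderiv_def)

lemma dderiv_ln_abs_divide:
  fixes a n :: "real^3 \<Rightarrow> real"
  assumes "a differentiable (at x)" and "n differentiable (at x)" and "a x \<noteq> 0" and "n x \<noteq> 0"
  shows "dderiv (\<lambda>y. ln \<bar>a y / n y\<bar>) X x = dderiv a X x / a x - dderiv n X x / n x"
proof -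
  have "((\<lambda>y. a y / n y) has_derivative (\<lambda>v. - a x * (inverse (n x) * frechet_derivative n (at x) v * inverse (n x))
      + frechet_derivative a (at x) v / n x)) (at x)"
    using has_derivative_divide assms frechet_derivative_works by blast
  moreover have "a x / n x \<noteq> 0"
    using assms(3,4) by simp
  ultimately have "dderiv (\<lambda>y. ln \<bar>a y / n y\<bar>) X x
      = (- a x * (inverse (n x) * frechet_derivative n (at x) (X x) * inverse (n x))
         + frechet_derivative a (at x) (X x) / n x) / (a x / n x)"
    by (rule dderiv_eqI[OF has_derivative_ln_abs])
  also have "\<dots> = dderiv a X x / a x - dderiv n X x / n x"
    unfolding dderiv_def using assms(3,4) by (simp add: field_simps)
  finally show ?thesis .
qed

lemma dderiv_transform_open:
  assumes "open U" and "x \<in> U" and "\<forall>y\<in>U. f y = h y" and "h differentiable (at x)"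
  shows "dderiv f X x = dderiv h X x"
  unfolding dderiv_def using frechet_derivative_transform_within_open[of h x U f] assms by auto

lemma dderiv_eq_0_if_vanishing:
  fixes f :: "real^3 \<Rightarrow> 'a::real_normed_vector"
  assumes "open U" and "x \<in> U" and "\<forall>y\<in>U. f y = 0"
  shows "dderiv f X x = 0"
  using dderiv_transform_open[OF assms differentiable_const] by (simp add: dderiv_const)

definition curl3 :: "(real^3 \<Rightarrow> real^3) \<Rightarrow> real^3 \<Rightarrow> real^3" where
  "curl3 w x = vector [pd w 2 3 x - pd w 3 2 x, pd w 3 1 x - pd w 1 3 x, pd w 1 2 x - pd w 2 1 x]"

lemma curl_eq_curl3: "curl g J x = (1 / sqrt (det (g x))) *\<^sub>R curl3 (\<lambda>y. g y *v J y) x"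
  unfolding curl_def curl3_def Let_def ..

lemma curl3_inner_cross:
  assumes "w differentiable (at x)"
  shows "curl3 w x \<bullet> cross3 a b = frechet_derivative w (at x) a \<bullet> b - frechet_derivative w (at x) b \<bullet> a"
proof -
  define L where "L = frechet_derivative w (at x)"
  have lin: "Vector_Spaces.linear (*s) (*s) L"
    using assms linear_frechet_derivative unfolding L_def by (auto simp: linear_matrix_vector_mul_eq)
  have L: "L u $ k = u$1 * L (axis 1 1) $ k + u$2 * L (axis 2 1) $ k + u$3 * L (axis 3 1) $ k"
    for u k
    using Cartesian_Space.linear_componentwise[OF lin, of u k] by (simp only: sum_3)
  show ?thesis
    unfolding curl3_def pd_def L_def[symmetric] inner_vec_def sum_3 cross3_def vector_3 inner_real_def
    using L[of a] L[of b] by (simp add: algebra_simps)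
qed

lemma curl3_inner_cross_fields:
  assumes w: "w differentiable (at x)" and X: "X differentiable (at x)" and Y: "Y differentiable (at x)"
  shows "curl3 w x \<bullet> cross3 (X x) (Y x)
    = dderiv (\<lambda>y. w y \<bullet> Y y) X x - dderiv (\<lambda>y. w y \<bullet> X y) Y x - w x \<bullet> lie_bracket X Y x"
proof -
  note has_frechet = assms[unfolded frechet_derivative_works]
  have "dderiv (\<lambda>y. w y \<bullet> Y y) X x = w x \<bullet> dderiv Y X x + dderiv w X x \<bullet> Y x"
    and "dderiv (\<lambda>y. w y \<bullet> X y) Y x = w x \<bullet> dderiv X Y x + dderiv w Y x \<bullet> X x"
    using dderiv_eqI[OF has_derivative_inner[OF has_frechet(1,3)], of X]
      dderiv_eqI[OF has_derivative_inner[OF has_frechet(1,2)], of Y]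
    by (simp_all add: dderiv_def)
  then show ?thesis
    using curl3_inner_cross[OF w]
    by (simp add: lie_bracket_def dderiv_def inner_diff_right algebra_simps)
qed

lemma gnorm_differentiable:
  assumes metric: "riem_metric g U" and "x \<in> U" and "v x \<noteq> 0" and "v differentiable (at x)"
  shows "(\<lambda>y. gnorm g y (v y)) differentiable (at x)" and "gnorm g x (v x) > 0"
proof -
  have pos: "v x \<bullet> (g x *v v x) > 0"
    using metric assms(2,3) unfolding riem_metric_def by blast
  have "(\<lambda>y. v y \<bullet> (g y *v v y)) differentiable (at x)"
    using metric assms(2,4) unfolding riem_metric_def
    by (intro differentiable_inner differentiable_matrix_vector_mult) auto
  then obtain q' where "((\<lambda>y. v y \<bullet> (g y *v v y)) has_derivative q') (at x)"
    unfolding differentiable_def by blast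
  from has_derivative_real_sqrt[OF pos this]
  show "(\<lambda>y. gnorm g y (v y)) differentiable (at x)"
    unfolding gnorm_def ginner_def by (rule differentiableI)
  show "gnorm g x (v x) > 0"
    using pos unfolding gnorm_def ginner_def by simp
qed

lemma dderiv_eq_if_dderiv_ln_abs_divide_gnorm:
  assumes metric: "riem_metric g U" and "\<forall>x\<in>U. v x \<noteq> 0" and "\<forall>x\<in>U. v differentiable (at x)"
    and "\<forall>x\<in>U. a differentiable (at x)" and "\<forall>x\<in>U. a x \<noteq> 0"
    and "\<forall>x\<in>U. dderiv (\<lambda>y. ln \<bar>a y / gnorm g y (v y)\<bar>) X x = r x"
  shows "\<forall>x\<in>U. dderiv a X x = a x * (dderiv (\<lambda>y. gnorm g y (v y)) X x / gnorm g x (v x) + r x)"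
proof
  fix x assume "x \<in> U"
  with assms(2,3) gnorm_differentiable[OF metric \<open>x \<in> U\<close>]
  have "(\<lambda>y. gnorm g y (v y)) differentiable (at x)" and "gnorm g x (v x) \<noteq> 0"
    by (metis less_irrefl)+
  with assms(4-6) \<open>x \<in> U\<close> show "dderiv a X x = a x * (dderiv (\<lambda>y. gnorm g y (v y)) X x / gnorm g x (v x) + r x)"
    using dderiv_ln_abs_divide[of a x "\<lambda>y. gnorm g y (v y)" X] by (simp add: field_simps)
qed

lemma orthonormal_gcross_frame:
  fixes E :: "3 \<Rightarrow> real^3 \<Rightarrow> real^3"
  assumes metric: "riem_metric g U" and "x \<in> U" and "v x \<noteq> 0"
    and E1: "E 1 x = (1 / gnorm g x (v x)) *\<^sub>R v x"
    and E2: "ginner g x (E 2 x) (E 2 x) = 1" and E12: "ginner g x (E 1 x) (E 2 x) = 0"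
    and E3: "E 3 x = gcross g x (E 1 x) (E 2 x)"
  shows "ginner g x (E i x) (E j x) = (if i = j then 1 else 0)"
proof -
  have sym: "transpose (g x) = g x" and pos: "\<forall>u. u \<noteq> 0 \<longrightarrow> u \<bullet> (g x *v u) > 0"
    using metric \<open>x \<in> U\<close> unfolding riem_metric_def by blast+
  have "v x \<bullet> (g x *v v x) > 0"
    using pos \<open>v x \<noteq> 0\<close> by blast
  then have E11: "ginner g x (E 1 x) (E 1 x) = 1"
    unfolding E1 gnorm_def ginner_def by (simp add: matrix_vector_mult_scaleR)
  have swap: "ginner g x u w = ginner g x w u" for u w
    unfolding ginner_def using inner_matrix_symmetric[OF sym] by (metis inner_commute)
  note E3_orthonormal = gcross_orthonormal[OF sym pos E11[unfolded ginner_def] E2[unfolded ginner_def]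
      E12[unfolded ginner_def] E3[unfolded gcross_def]]
  show ?thesis
    using exhaust_3[of i] exhaust_3[of j] E11 E2 E12 E3_orthonormal[folded ginner_def]
      swap[of "E 1 x" "E 2 x"] swap[of "E 1 x" "E 3 x"] swap[of "E 2 x" "E 3 x"]
    by auto
qed

text \<open>The mixed terms reduce to \<open>a1 a2 c123 ((m1 - m2)\<^sup>2 - (m1 - m2)\<^sup>2)\<close>, one square coming
  from the equations for \<open>a1\<close>, \<open>a2\<close> and the other from the Riccati equations.\<close>

lemma riccati_combination_identity:
  fixes a1 a2 m1 m2 da1 da2 dm1 dm2 k c312 c313 c122 c123 :: real
  assumes "dm1 = - c312 - m1 * (c313 + c122) - m1\<^sup>2 * c123"
    and "dm2 = - c312 - m2 * (c313 + c122) - m2\<^sup>2 * c123"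
    and "da1 = a1 * (k + c313 + m1 * c123)"
    and "da2 = a2 * (k + c313 + m2 * c123)"
  shows "(a1 + a2) * (- (a1 * dm1 + da1 * m1 + (a2 * dm2 + da2 * m2))
           - c312 * (a1 + a2) - c313 * (a1 * m1 + a2 * m2))
         + (a1 * m1 + a2 * m2) * (da1 + da2 - c122 * (a1 + a2) - c123 * (a1 * m1 + a2 * m2)) = 0"
  unfolding assms by (simp add: algebra_simps power2_eq_square)

locale orthonormal_frame =
  fixes g :: "real^3 \<Rightarrow> real^3^3" and U :: "(real^3) set"
    and E :: "3 \<Rightarrow> real^3 \<Rightarrow> real^3" and C :: "3 \<Rightarrow> 3 \<Rightarrow> 3 \<Rightarrow> real^3 \<Rightarrow> real"
  assumes metric: "riem_metric g U"
    and frame_differentiable: "\<forall>i. \<forall>x\<in>U. E i differentiable (at x)"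
    and orthonormal: "\<forall>x\<in>U. \<forall>i j. ginner g x (E i x) (E j x) = (if i = j then 1 else 0)"
    and structure_functions: "\<forall>x\<in>U. \<forall>i j. lie_bracket (E i) (E j) x = (\<Sum>k\<in>UNIV. C i j k x *\<^sub>R E k x)"
begin

text \<open>For the 1-form \<open>\<omega> = f2 e\<^sup>2 + f3 e\<^sup>3\<close> metrically dual to \<open>f2 E2 + f3 E3\<close>, the two brackets
  are \<open>d\<omega>(E3, E1)\<close> and \<open>d\<omega>(E1, E2)\<close>, so this is \<open>(\<omega> \<and> d\<omega>)(E1, E2, E3)\<close>.\<close>

definition poisson_form :: "(real^3 \<Rightarrow> real) \<Rightarrow> (real^3 \<Rightarrow> real) \<Rightarrow> real^3 \<Rightarrow> real" where
  "poisson_form f2 f3 x =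
     f2 x * (- dderiv f3 (E 1) x - C 3 1 2 x * f2 x - C 3 1 3 x * f3 x)
   + f3 x * (dderiv f2 (E 1) x - C 1 2 2 x * f2 x - C 1 2 3 x * f3 x)"

lemma lowered_inner_frame:
  assumes "y \<in> U"
  shows "(g y *v (f2 y *\<^sub>R E 2 y + f3 y *\<^sub>R E 3 y)) \<bullet> E j y
    = (if j = 2 then f2 y else if j = 3 then f3 y else 0)"
proof -
  have "transpose (g y) = g y"
    using metric assms unfolding riem_metric_def by blast
  then have "(g y *v (f2 y *\<^sub>R E 2 y + f3 y *\<^sub>R E 3 y)) \<bullet> E j y
      = f2 y * ginner g y (E 2 y) (E j y) + f3 y * ginner g y (E 3 y) (E j y)"
    by (simp add: inner_matrix_symmetric[symmetric] ginner_def inner_add_left)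
  then show ?thesis
    using orthonormal assms exhaust_3[of j] by auto
qed

lemma curl3_lowered_frame:
  assumes "x \<in> U" and f2: "f2 differentiable (at x)" and f3: "f3 differentiable (at x)"
  defines "w \<equiv> \<lambda>y. g y *v (f2 y *\<^sub>R E 2 y + f3 y *\<^sub>R E 3 y)"
  shows "curl3 w x \<bullet> cross3 (E 3 x) (E 1 x) = - dderiv f3 (E 1) x - C 3 1 2 x * f2 x - C 3 1 3 x * f3 x"
    and "curl3 w x \<bullet> cross3 (E 1 x) (E 2 x) = dderiv f2 (E 1) x - C 1 2 2 x * f2 x - C 1 2 3 x * f3 x"
proof -
  have "open U"
    using metric unfolding riem_metric_def by blast
  have E: "E i differentiable (at x)" for i
    using frame_differentiable \<open>x \<in> U\<close> by blast
  have "w differentiable (at x)"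
    unfolding w_def using metric \<open>x \<in> U\<close> E f2 f3 unfolding riem_metric_def
    by (intro differentiable_matrix_vector_mult differentiable_add differentiable_scaleR) auto
  note curl3_E = curl3_inner_cross_fields[OF this E E]
  have wE: "\<forall>y\<in>U. w y \<bullet> E 1 y = 0" "\<forall>y\<in>U. w y \<bullet> E 2 y = f2 y" "\<forall>y\<in>U. w y \<bullet> E 3 y = f3 y"
    unfolding w_def by (simp_all add: lowered_inner_frame)
  have "dderiv (\<lambda>y. w y \<bullet> E 1 y) X x = 0" for X
    using dderiv_eq_0_if_vanishing[OF \<open>open U\<close> \<open>x \<in> U\<close> wE(1)] .
  moreover have "dderiv (\<lambda>y. w y \<bullet> E 2 y) X x = dderiv f2 X x" for X
    using dderiv_transform_open[OF \<open>open U\<close> \<open>x \<in> U\<close> wE(2) f2] .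
  moreover have "dderiv (\<lambda>y. w y \<bullet> E 3 y) X x = dderiv f3 X x" for X
    using dderiv_transform_open[OF \<open>open U\<close> \<open>x \<in> U\<close> wE(3) f3] .
  moreover have "w x \<bullet> lie_bracket (E i) (E j) x = C i j 2 x * f2 x + C i j 3 x * f3 x" for i j
    using structure_functions \<open>x \<in> U\<close> wE by (simp add: sum_3 inner_add_right)
  ultimately show "curl3 w x \<bullet> cross3 (E 3 x) (E 1 x) = - dderiv f3 (E 1) x - C 3 1 2 x * f2 x - C 3 1 3 x * f3 x"
    and "curl3 w x \<bullet> cross3 (E 1 x) (E 2 x) = dderiv f2 (E 1) x - C 1 2 2 x * f2 x - C 1 2 3 x * f3 x"
    using curl3_E by simp_all
qed

lemma inner_curl_eq_0_if_poisson_form_eq_0: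
  assumes "x \<in> U" and f2: "f2 differentiable (at x)" and f3: "f3 differentiable (at x)"
    and "poisson_form f2 f3 x = 0"
  defines "J \<equiv> \<lambda>y. f2 y *\<^sub>R E 2 y + f3 y *\<^sub>R E 3 y"
  shows "ginner g x (J x) (curl g J x) = 0"
proof -
  define w where "w = (\<lambda>y. g y *v J y)"
  define c where "c = curl3 w x"
  define t where "t = (\<lambda>k. g x *v E k x)"
  define D where "D = det (vector [E 1 x, E 2 x, E 3 x] :: real^3^3)"
  have sym: "transpose (g x) = g x"
    using metric \<open>x \<in> U\<close> unfolding riem_metric_def by blast
  have "E i x \<bullet> t j = (if i = j then 1 else 0)" for i j
    using orthonormal \<open>x \<in> U\<close> unfolding t_def ginner_def by blast
  then have "D \<noteq> 0"
    and Dt: "D * (t 2 \<bullet> c) = c \<bullet> cross3 (E 3 x) (E 1 x)" "D * (t 3 \<bullet> c) = c \<bullet> cross3 (E 1 x) (E 2 x)"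
    unfolding D_def using dual_basis_cross3[of "E 1 x" "t 1" "t 2" "t 3" "E 2 x" "E 3 x"] by simp_all
  have "w x = f2 x *\<^sub>R t 2 + f3 x *\<^sub>R t 3"
    unfolding w_def J_def t_def by (simp add: matrix_vector_right_distrib matrix_vector_mult_scaleR)
  then have "D * (w x \<bullet> c) = f2 x * (D * (t 2 \<bullet> c)) + f3 x * (D * (t 3 \<bullet> c))"
    by (simp add: inner_add_left algebra_simps)
  also have "\<dots> = f2 x * (c \<bullet> cross3 (E 3 x) (E 1 x)) + f3 x * (c \<bullet> cross3 (E 1 x) (E 2 x))"
    unfolding Dt ..
  also have "\<dots> = poisson_form f2 f3 x"
    unfolding c_def w_def J_def curl3_lowered_frame[OF \<open>x \<in> U\<close> f2 f3] poisson_form_def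
    by (simp add: algebra_simps)
  finally have "w x \<bullet> c = 0"
    using \<open>D \<noteq> 0\<close> \<open>poisson_form f2 f3 x = 0\<close> by simp
  then show ?thesis
    unfolding ginner_def curl_eq_curl3 w_def[symmetric] c_def[symmetric]
    by (simp add: matrix_vector_mult_scaleR inner_matrix_symmetric[OF sym] w_def)
qed

lemma poisson_riccati_combination:
  assumes a1: "\<forall>x\<in>U. a1 differentiable (at x)" and a2: "\<forall>x\<in>U. a2 differentiable (at x)"
    and mu1: "\<forall>x\<in>U. mu1 differentiable (at x)" and mu2: "\<forall>x\<in>U. mu2 differentiable (at x)"
    and mu1_eq: "\<forall>x\<in>U. dderiv mu1 (E 1) x =
        - C 3 1 2 x - mu1 x * (C 3 1 3 x + C 1 2 2 x) - (mu1 x)\<^sup>2 * C 1 2 3 x"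
    and mu2_eq: "\<forall>x\<in>U. dderiv mu2 (E 1) x =
        - C 3 1 2 x - mu2 x * (C 3 1 3 x + C 1 2 2 x) - (mu2 x)\<^sup>2 * C 1 2 3 x"
    and a1_eq: "\<forall>x\<in>U. dderiv a1 (E 1) x = a1 x * (k x + C 3 1 3 x + mu1 x * C 1 2 3 x)"
    and a2_eq: "\<forall>x\<in>U. dderiv a2 (E 1) x = a2 x * (k x + C 3 1 3 x + mu2 x * C 1 2 3 x)"
  shows "poisson g U (\<lambda>y. a1 y *\<^sub>R (E 2 y + mu1 y *\<^sub>R E 3 y) + a2 y *\<^sub>R (E 2 y + mu2 y *\<^sub>R E 3 y))"
  unfolding poisson_def
proof
  fix x assume "x \<in> U"
  define f2 where "f2 = (\<lambda>y. a1 y + a2 y)"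
  define f3 where "f3 = (\<lambda>y. a1 y * mu1 y + a2 y * mu2 y)"
  have J: "(\<lambda>y. a1 y *\<^sub>R (E 2 y + mu1 y *\<^sub>R E 3 y) + a2 y *\<^sub>R (E 2 y + mu2 y *\<^sub>R E 3 y))
      = (\<lambda>y. f2 y *\<^sub>R E 2 y + f3 y *\<^sub>R E 3 y)"
    unfolding f2_def f3_def by (simp add: fun_eq_iff algebra_simps)
  have diff: "a1 differentiable (at x)" "a2 differentiable (at x)"
    "mu1 differentiable (at x)" "mu2 differentiable (at x)"
    using a1 a2 mu1 mu2 \<open>x \<in> U\<close> by blast+
  then have f2: "f2 differentiable (at x)" and f3: "f3 differentiable (at x)"
    unfolding f2_def f3_def by simp_all
  have "dderiv f2 (E 1) x = dderiv a1 (E 1) x + dderiv a2 (E 1) x"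
    and "dderiv f3 (E 1) x = a1 x * dderiv mu1 (E 1) x + dderiv a1 (E 1) x * mu1 x
      + (a2 x * dderiv mu2 (E 1) x + dderiv a2 (E 1) x * mu2 x)"
    unfolding f2_def f3_def using diff by (simp_all add: dderiv_add dderiv_mult)
  moreover note riccati_combination_identity[OF mu1_eq[rule_format, OF \<open>x \<in> U\<close>]
      mu2_eq[rule_format, OF \<open>x \<in> U\<close>] a1_eq[rule_format, OF \<open>x \<in> U\<close>] a2_eq[rule_format, OF \<open>x \<in> U\<close>]]
  ultimately have "poisson_form f2 f3 x = 0"
    unfolding poisson_form_def f2_def f3_def by (simp add: algebra_simps)
  then show "ginner g x ((\<lambda>y. a1 y *\<^sub>R (E 2 y + mu1 y *\<^sub>R E 3 y) + a2 y *\<^sub>R (E 2 y + mu2 y *\<^sub>R E 3 y)) x)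
      (curl g (\<lambda>y. a1 y *\<^sub>R (E 2 y + mu1 y *\<^sub>R E 3 y) + a2 y *\<^sub>R (E 2 y + mu2 y *\<^sub>R E 3 y)) x) = 0"
    unfolding J fun_cong[OF J] using inner_curl_eq_0_if_poisson_form_eq_0[OF \<open>x \<in> U\<close> f2 f3] by blast
qed

end

theorem corollary1:
  fixes U :: "(real^3) set" and g :: "real^3 \<Rightarrow> real^3^3"
    and v :: "real^3 \<Rightarrow> real^3" and E :: "3 \<Rightarrow> real^3 \<Rightarrow> real^3"
    and C :: "3 \<Rightarrow> 3 \<Rightarrow> 3 \<Rightarrow> real^3 \<Rightarrow> real"
    and mu1 mu2 a1 a2 :: "real^3 \<Rightarrow> real"
  assumes metric: "riem_metric g U"
    and v_nz: "\<forall>x\<in>U. v x \<noteq> 0"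
    and v_diff: "\<forall>x\<in>U. v differentiable (at x)"
    and E1: "\<forall>x\<in>U. E 1 x = (1 / gnorm g x (v x)) *\<^sub>R v x"
    and E2_unit: "\<forall>x\<in>U. ginner g x (E 2 x) (E 2 x) = 1"
    and E12_orth: "\<forall>x\<in>U. ginner g x (E 1 x) (E 2 x) = 0"
    and E3: "\<forall>x\<in>U. E 3 x = gcross g x (E 1 x) (E 2 x)"
    and E_diff: "\<forall>i. \<forall>x\<in>U. E i differentiable (at x)"
    and C_def: "\<forall>x\<in>U. \<forall>i j. lie_bracket (E i) (E j) x = (\<Sum>k\<in>UNIV. C i j k x *\<^sub>R E k x)"
    and mu1_diff: "\<forall>x\<in>U. mu1 differentiable (at x)"
    and mu2_diff: "\<forall>x\<in>U. mu2 differentiable (at x)"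
    and mu1_eq: "\<forall>x\<in>U. dderiv mu1 (E 1) x =
        - C 3 1 2 x - mu1 x * (C 3 1 3 x + C 1 2 2 x) - (mu1 x)\<^sup>2 * C 1 2 3 x"
    and mu2_eq: "\<forall>x\<in>U. dderiv mu2 (E 1) x =
        - C 3 1 2 x - mu2 x * (C 3 1 3 x + C 1 2 2 x) - (mu2 x)\<^sup>2 * C 1 2 3 x"
    and mu_neq: "\<forall>x\<in>U. mu1 x \<noteq> mu2 x"
    and a1_nz: "\<forall>x\<in>U. a1 x \<noteq> 0"
    and a2_nz: "\<forall>x\<in>U. a2 x \<noteq> 0"
    and a1_diff: "\<forall>x\<in>U. a1 differentiable (at x)"
    and a2_diff: "\<forall>x\<in>U. a2 differentiable (at x)"
    and a1_eq: "\<forall>x\<in>U. dderiv (\<lambda>y. ln \<bar>a1 y / gnorm g y (v y)\<bar>) (E 1) x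
        = C 3 1 3 x + mu1 x * C 1 2 3 x"
    and a2_eq: "\<forall>x\<in>U. dderiv (\<lambda>y. ln \<bar>a2 y / gnorm g y (v y)\<bar>) (E 1) x
        = C 3 1 3 x + mu2 x * C 1 2 3 x"
  shows "compatible g U (\<lambda>x. a1 x *\<^sub>R (E 2 x + mu1 x *\<^sub>R E 3 x))
                        (\<lambda>x. a2 x *\<^sub>R (E 2 x + mu2 x *\<^sub>R E 3 x))"
proof -
  interpret orthonormal_frame g U E C
  proof
    show "\<forall>x\<in>U. \<forall>i j. ginner g x (E i x) (E j x) = (if i = j then 1 else 0)"
      using orthonormal_gcross_frame[OF metric] v_nz E1 E2_unit E12_orth E3 by blast
  qed (fact metric E_diff C_def)+
  define k where "k = (\<lambda>x. dderiv (\<lambda>y. gnorm g y (v y)) (E 1) x / gnorm g x (v x))"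
  have A1: "\<forall>x\<in>U. dderiv a1 (E 1) x = a1 x * (k x + C 3 1 3 x + mu1 x * C 1 2 3 x)"
    and A2: "\<forall>x\<in>U. dderiv a2 (E 1) x = a2 x * (k x + C 3 1 3 x + mu2 x * C 1 2 3 x)"
    using dderiv_eq_if_dderiv_ln_abs_divide_gnorm[OF metric v_nz v_diff a1_diff a1_nz a1_eq]
      dderiv_eq_if_dderiv_ln_abs_divide_gnorm[OF metric v_nz v_diff a2_diff a2_nz a2_eq]
    unfolding k_def by (simp_all add: add.assoc)
  have "poisson g U (\<lambda>x. a1 x *\<^sub>R (E 2 x + mu1 x *\<^sub>R E 3 x) + a2 x *\<^sub>R (E 2 x + mu2 x *\<^sub>R E 3 x))"
    by (rule poisson_riccati_combination[OF a1_diff a2_diff mu1_diff mu2_diff mu1_eq mu2_eq A1 A2])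
  moreover have "poisson g U (\<lambda>x. a1 x *\<^sub>R (E 2 x + mu1 x *\<^sub>R E 3 x) + 0 *\<^sub>R (E 2 x + mu1 x *\<^sub>R E 3 x))"
    by (rule poisson_riccati_combination[OF a1_diff _ mu1_diff mu1_diff mu1_eq mu1_eq A1])
      (simp_all add: dderiv_const)
  moreover have "poisson g U (\<lambda>x. 0 *\<^sub>R (E 2 x + mu2 x *\<^sub>R E 3 x) + a2 x *\<^sub>R (E 2 x + mu2 x *\<^sub>R E 3 x))"
    by (rule poisson_riccati_combination[OF _ a2_diff mu2_diff mu2_diff mu2_eq mu2_eq _ A2])
      (simp_all add: dderiv_const)
  ultimately show ?thesis
    unfolding compatible_def by simp
qed

end
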